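(* Let $\gamma,\alpha,\beta$ be real constants and $\phi\in[0,1]$. Let $X$ be a random variable with values in $\mathbb{N}=\{0,1,2,\dots\}$ whose probability generating function satisfies $$g_X(s)=E[s^X]=h\big(\alpha+\beta(1-\phi s)^\gamma\big),\qquad s\in[0,1],$$ where $h$ is a real function analytic in a neighbourhood of $\alpha+\beta$. Then for every $k\in\mathbb{N}$, $$P(X=k)=(-\phi)^k\sum_{m=0}^k\frac{(-\beta)^m}{m!}\,h^{(m)}(\alpha+\beta)\,C_{\gamma,m}(k),$$ where $h^{(m)}$ denotes the $m$-th derivative of $h$ and $$C_{\gamma,m}(k)=\sum_{j=0}^m(-1)^j\binom{m}{j}\binom{\gamma j}{k}.$$
   Context: For real $x$ and $k\in\mathbb{N}$, $\binom{x}{k}=x(x-1)\cdots(x-k+1)/k!$ (with $\binom{x}{0}=1$). *)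

theory Defs
  imports "HOL-Analysis.Analysis" "HOL-Probability.Probability_Mass_Function"
begin

definition real_analytic_at :: "(real \<Rightarrow> real) \<Rightarrow> real \<Rightarrow> bool" where
  "real_analytic_at h x0 \<longleftrightarrow>
     (\<exists>r>0. \<exists>c :: nat \<Rightarrow> real. \<forall>x. \<bar>x - x0\<bar> < r \<longrightarrow> (\<lambda>n. c n * (x - x0) ^ n) sums h x)"

definition C_coeff :: "real \<Rightarrow> nat \<Rightarrow> nat \<Rightarrow> real" where
  "C_coeff \<gamma> m k = (\<Sum>j\<le>m. (-1) ^ j * real (m choose j) * ((\<gamma> * real j) gchoose k))"

end

theory Submission
  imports Defs
begin

text \<open>Let G(s) = \<beta>((1 - \<phi>s)^\<gamma> - 1), a power series without constant term (a generalised
  binomial series), and let T be the Taylor series of h at \<alpha> + \<beta>. The hypothesis says that the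
  generating function of X agrees with T(G(s)) for small s > 0. Comparing coefficients, it is the
  formal composition T \<circ> G, so P(X = k) = \<Sum>_{m \<le> k} h^(m)(\<alpha> + \<beta>) / m! \<cdot> [s^k] G(s)^m.
  Expanding ((1 - \<phi>s)^\<gamma> - 1)^m binomially and using ((1 - \<phi>s)^\<gamma>)^j = (1 - \<phi>s)^(\<gamma>j) gives
  [s^k] G(s)^m = \<beta>^m (-\<phi>)^k (-1)^m C_{\<gamma>,m}(k).\<close>

lemma eventually_norm_less_fps_conv_radius:
  fixes F :: "'a :: {banach, real_normed_div_algebra} fps"
  assumes "fps_conv_radius F > 0"
  shows "eventually (\<lambda>z. ereal (norm z) < fps_conv_radius F) (nhds 0)"
proof -
  have "eventually (\<lambda>z. z \<in> eball 0 (fps_conv_radius F)) (nhds 0)"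
    using assms by (intro eventually_nhds_in_open) (auto simp: zero_ereal_def)
  thus ?thesis by (auto elim!: eventually_mono simp: dist_norm)
qed

lemma tendsto_eval_fps_at_0:
  fixes F :: "'a :: {banach, real_normed_field} fps"
  assumes "fps_conv_radius F > 0"
  shows "(eval_fps F \<longlongrightarrow> fps_nth F 0) (at 0 within A)"
  using continuous_eval_fps[of 0 F A] assms
  by (simp add: continuous_within eval_fps_at_0 zero_ereal_def)

lemma higher_deriv_eval_fps_centered:
  fixes F :: "real fps"
  assumes "fps_conv_radius F > 0"
  shows "(deriv ^^ n) (\<lambda>x. eval_fps F (x - a)) a = fact n * fps_nth F n"
  using assms
proof (induction n arbitrary: F)
  case 0
  thus ?case by (simp add: eval_fps_at_0)
next
  case (Suc n F)
  have "filterlim (\<lambda>x. x - a) (nhds 0) (nhds a)"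
    by (intro LIM_zero filterlim_ident)
  hence "eventually (\<lambda>x. ereal (norm (x - a)) < fps_conv_radius F) (nhds a)"
    by (rule eventually_compose_filterlim[OF eventually_norm_less_fps_conv_radius[OF Suc.prems]])
  hence "eventually (\<lambda>x. deriv (\<lambda>x. eval_fps F (x - a)) x = eval_fps (fps_deriv F) (x - a)) (nhds a)"
  proof eventually_elim
    case (elim x)
    hence "((\<lambda>x. eval_fps F (x - a)) has_field_derivative eval_fps (fps_deriv F) (x - a) * 1) (at x)"
      by (intro DERIV_chain2[OF has_field_derivative_eval_fps]) (auto intro!: derivative_eq_intros)
    thus ?case by (intro DERIV_imp_deriv) simp
  qed
  hence "(deriv ^^ Suc n) (\<lambda>x. eval_fps F (x - a)) a =
      (deriv ^^ n) (\<lambda>x. eval_fps (fps_deriv F) (x - a)) a"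
    unfolding funpow_Suc_right o_def by (intro higher_deriv_cong_ev refl)
  also have "\<dots> = fact n * fps_nth (fps_deriv F) n"
    using Suc.prems fps_conv_radius_deriv[of F] by (intro Suc.IH) auto
  also have "\<dots> = fact (Suc n) * fps_nth F (Suc n)"
    by (simp add: fps_deriv_def algebra_simps)
  finally show ?case .
qed

definition taylor_fps :: "(real \<Rightarrow> real) \<Rightarrow> real \<Rightarrow> real fps" where
  "taylor_fps h x0 = Abs_fps (\<lambda>m. (deriv ^^ m) h x0 / fact m)"

lemma real_analytic_at_taylor_fps:
  assumes "real_analytic_at h x0"
  shows "fps_conv_radius (taylor_fps h x0) > 0"
    and "eventually (\<lambda>y. h (x0 + y) = eval_fps (taylor_fps h x0) y) (nhds 0)"
proof -
  obtain r c where r: "r > 0" and c: "\<And>x. \<bar>x - x0\<bar> < r \<Longrightarrow> (\<lambda>n. c n * (x - x0) ^ n) sums h x"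
    using assms unfolding real_analytic_at_def by blast
  define H where "H = Abs_fps c"
  have "ereal r \<le> fps_conv_radius H"
    unfolding fps_conv_radius_def H_def fps_nth_Abs_fps
  proof (rule conv_radius_geI_ex')
    fix \<rho> :: real assume "0 < \<rho>" "ereal \<rho> < ereal r"
    with c[of "x0 + \<rho>"] show "summable (\<lambda>n. c n * of_real \<rho> ^ n)" by (simp add: sums_iff)
  qed
  with r have radius: "fps_conv_radius H > 0"
    by (metis ereal_less(2) order_less_le_trans)
  have expansion: "h x = eval_fps H (x - x0)" if "\<bar>x - x0\<bar> < r" for x
    using c[OF that] unfolding eval_fps_def H_def by (simp add: sums_iff)
  have "eventually (\<lambda>x. h x = eval_fps H (x - x0)) (nhds x0)"
    unfolding eventually_nhds_metric dist_real_def using r expansion by blast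
  hence "(deriv ^^ m) h x0 = (deriv ^^ m) (\<lambda>x. eval_fps H (x - x0)) x0" for m
    by (intro higher_deriv_cong_ev refl)
  hence "taylor_fps h x0 = H"
    by (simp add: fps_eq_iff taylor_fps_def higher_deriv_eval_fps_centered[OF radius])
  moreover have "eventually (\<lambda>y. h (x0 + y) = eval_fps H y) (nhds 0)"
    unfolding eventually_nhds_metric dist_real_def
    using r expansion[of "x0 + _"] by (intro exI[of _ r]) auto
  ultimately show "fps_conv_radius (taylor_fps h x0) > 0"
    and "eventually (\<lambda>y. h (x0 + y) = eval_fps (taylor_fps h x0) y) (nhds 0)"
    using radius by simp_all
qed

lemma fps_conv_radius_sum:
  fixes F :: "'i \<Rightarrow> 'a :: {banach, real_normed_div_algebra} fps"
  assumes "\<And>i. i \<in> I \<Longrightarrow> r \<le> fps_conv_radius (F i)"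
  shows "r \<le> fps_conv_radius (\<Sum>i\<in>I. F i)"
  using assms
proof (induction I rule: infinite_finite_induct)
  case (insert i I)
  hence "r \<le> min (fps_conv_radius (F i)) (fps_conv_radius (\<Sum>i\<in>I. F i))"
    by simp
  hence "r \<le> fps_conv_radius (F i + (\<Sum>i\<in>I. F i))"
    using fps_conv_radius_add order_trans by blast
  thus ?case
    using insert.hyps by simp
qed simp_all

lemma eval_fps_sum:
  fixes F :: "'i \<Rightarrow> 'a :: {banach, real_normed_div_algebra} fps"
  assumes "finite I" "ereal (norm z) < r" "\<And>i. i \<in> I \<Longrightarrow> r \<le> fps_conv_radius (F i)"
  shows "eval_fps (\<Sum>i\<in>I. F i) z = (\<Sum>i\<in>I. eval_fps (F i) z)"
  using assms
proof (induction I rule: finite_induct)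
  case (insert i I)
  have "r \<le> fps_conv_radius (\<Sum>i\<in>I. F i)"
    using insert.prems by (intro fps_conv_radius_sum) auto
  hence "ereal (norm z) < fps_conv_radius (\<Sum>i\<in>I. F i)"
    using insert.prems(1) by (rule order_less_le_trans[rotated])
  moreover have "ereal (norm z) < fps_conv_radius (F i)"
    using insert.prems by (blast intro: order_less_le_trans)
  ultimately show ?case
    using insert by (simp add: eval_fps_add)
qed simp

lemma eval_fps_eq_truncation_plus_shift:
  fixes H :: "'a :: {banach, real_normed_field} fps"
  assumes "ereal (norm y) < fps_conv_radius H"
  shows "eval_fps H y = (\<Sum>m<K. fps_nth H m * y ^ m) + y ^ K * eval_fps (fps_shift K H) y"
proof -
  have "(\<lambda>i. fps_nth H (i + K) * y ^ (i + K)) sums (eval_fps H y - (\<Sum>m<K. fps_nth H m * y ^ m))"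
    using sums_eval_fps[OF assms] by (subst sums_iff_shift) simp
  moreover have "(\<lambda>i. fps_nth H (i + K) * y ^ (i + K)) sums (y ^ K * eval_fps (fps_shift K H) y)"
    using sums_mult[OF sums_eval_fps[of y "fps_shift K H"], of "y ^ K"] assms
    by (simp add: power_add mult_ac)
  ultimately have "eval_fps H y - (\<Sum>m<K. fps_nth H m * y ^ m) = y ^ K * eval_fps (fps_shift K H) y"
    by (rule sums_unique2)
  thus ?thesis
    by (simp add: algebra_simps)
qed

lemma fps_nth_eq_0_if_eval_fps_eq_power_mult:
  fixes D :: "real fps" and W :: "real \<Rightarrow> real"
  assumes radius: "fps_conv_radius D > 0" and W: "(W \<longlongrightarrow> w) (at_right 0)"
    and eval: "eventually (\<lambda>s. eval_fps D s = s ^ K * W s) (at_right 0)"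
  shows "n < K \<Longrightarrow> fps_nth D n = 0"
proof (induction n rule: less_induct)
  case (less n)
  define E where "E = fps_shift n D"
  have D_eq: "D = fps_X ^ n * E"
  proof -
    have "fps_cutoff n D = 0"
      using less by (simp add: fps_eq_iff)
    thus ?thesis
      using fps_shift_cutoff'[of n D] by (simp add: E_def)
  qed
  have radius_E: "fps_conv_radius E > 0"
    using radius by (simp add: E_def)
  have "eventually (\<lambda>s. s > 0) (at_right (0::real))"
    by (simp add: eventually_at_right_less)
  moreover have "eventually (\<lambda>s::real. ereal (norm s) < fps_conv_radius E) (at_right 0)"
    using eventually_norm_less_fps_conv_radius[OF radius_E] by (rule filter_leD[OF at_within_le_nhds])
  ultimately have eval_E: "eventually (\<lambda>s. eval_fps E s = s ^ (K - n) * W s) (at_right 0)"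
    using eval
  proof eventually_elim
    case (elim s)
    hence "s ^ n * eval_fps E s = s ^ n * (s ^ (K - n) * W s)"
      using less(2) by (simp add: D_eq eval_fps_mult power_add[symmetric])
    thus ?case using elim by simp
  qed
  have "((\<lambda>s. s ^ (K - n) * W s) \<longlongrightarrow> 0 ^ (K - n) * w) (at_right 0)"
    by (intro tendsto_intros W)
  moreover have "(0::real) ^ (K - n) * w = 0"
    using less(2) by simp
  ultimately have "((\<lambda>s. s ^ (K - n) * W s) \<longlongrightarrow> 0) (at_right 0)"
    by simp
  hence "(eval_fps E \<longlongrightarrow> 0) (at_right 0)"
    using tendsto_cong[OF eval_E] by simp
  moreover have "(eval_fps E \<longlongrightarrow> fps_nth E 0) (at_right 0)"
    by (rule tendsto_eval_fps_at_0[OF radius_E])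
  ultimately have "0 = fps_nth E 0"
    by (rule tendsto_unique[OF trivial_limit_at_right_real])
  thus ?case
    by (simp add: E_def)
qed

lemma fps_conv_radius_const_mult_power:
  fixes G :: "'a :: {banach, real_normed_field} fps"
  shows "fps_conv_radius G \<le> fps_conv_radius (fps_const c * G ^ m)"
  using fps_conv_radius_mult[of "fps_const c" "G ^ m"] fps_conv_radius_power[of G m] by simp

lemma fps_conv_radius_truncated_compose:
  fixes H G :: "'a :: {banach, real_normed_field} fps"
  shows "fps_conv_radius G \<le> fps_conv_radius (\<Sum>m<K. fps_const (fps_nth H m) * G ^ m)"
  by (intro fps_conv_radius_sum fps_conv_radius_const_mult_power)

lemma eval_fps_compose_eq_truncated_plus_shift:
  fixes H G :: "'a :: {banach, real_normed_field} fps"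
  assumes s: "ereal (norm s) < fps_conv_radius G"
    and G_s: "ereal (norm (eval_fps G s)) < fps_conv_radius H"
  shows "eval_fps H (eval_fps G s) = eval_fps (\<Sum>m<K. fps_const (fps_nth H m) * G ^ m) s +
    eval_fps G s ^ K * eval_fps (fps_shift K H) (eval_fps G s)"
proof -
  have "eval_fps (\<Sum>m<K. fps_const (fps_nth H m) * G ^ m) s =
      (\<Sum>m<K. eval_fps (fps_const (fps_nth H m) * G ^ m) s)"
    using s by (intro eval_fps_sum[where r = "fps_conv_radius G"] fps_conv_radius_const_mult_power) auto
  also have "\<dots> = (\<Sum>m<K. fps_nth H m * eval_fps G s ^ m)"
    using s fps_conv_radius_power[of G]
    by (intro sum.cong refl) (simp add: eval_fps_mult eval_fps_power order_less_le_trans)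
  finally show ?thesis
    using eval_fps_eq_truncation_plus_shift[OF G_s, where K = K] by simp
qed

text \<open>The k-th coefficient of H oo G involves only the coefficients of H up to k; truncating H
  after them changes H(G(s)) by a multiple of G(s)^(k+1) = O(s^(k+1)), which cannot affect the
  coefficients of P up to k.\<close>

lemma eval_fps_compose_eqD:
  fixes P H G :: "real fps"
  assumes radius_P: "fps_conv_radius P > 0" and radius_H: "fps_conv_radius H > 0"
    and radius_G: "fps_conv_radius G > 0" and G0: "fps_nth G 0 = 0"
    and eval: "eventually (\<lambda>s. eval_fps P s = eval_fps H (eval_fps G s)) (at_right 0)"
  shows "P = H oo G"
proof (rule fps_ext)
  fix k
  define K where "K = Suc k"
  define A where "A = (\<Sum>m<K. fps_const (fps_nth H m) * G ^ m)"
  define V where "V = fps_shift 1 G"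
  define W where "W = (\<lambda>s. eval_fps V s ^ K * eval_fps (fps_shift K H) (eval_fps G s))"
  have "fps_cutoff 1 G = 0"
    using G0 by (simp add: fps_eq_iff)
  hence G_eq: "G = fps_X * V"
    using fps_shift_cutoff'[of 1 G] by (simp add: V_def)
  have radius_A: "fps_conv_radius G \<le> fps_conv_radius A"
    unfolding A_def by (rule fps_conv_radius_truncated_compose)
  have radius_V: "fps_conv_radius V = fps_conv_radius G"
    by (simp add: V_def)
  have "fps_nth (P - A) k = 0"
  proof (rule fps_nth_eq_0_if_eval_fps_eq_power_mult)
    have "0 < min (fps_conv_radius P) (fps_conv_radius A)"
      using radius_P radius_G radius_A by (auto intro: order_less_le_trans)
    thus "fps_conv_radius (P - A) > 0"
      using fps_conv_radius_diff by (rule order_less_le_trans)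
    have cont_G: "isCont (eval_fps G) 0" and cont_V: "isCont (eval_fps V) 0"
      using radius_G radius_V by (auto intro!: continuous_eval_fps simp: zero_ereal_def)
    have "isCont (eval_fps (fps_shift K H)) (eval_fps G 0)"
      using radius_H G0 by (intro continuous_eval_fps) (simp add: eval_fps_at_0 zero_ereal_def)
    with cont_G have "isCont (\<lambda>s. eval_fps (fps_shift K H) (eval_fps G s)) 0"
      by (rule isCont_o2)
    with cont_V have "isCont W 0"
      unfolding W_def by (intro isCont_mult isCont_power)
    thus "(W \<longlongrightarrow> W 0) (at_right 0)"
      by (simp add: isCont_def filterlim_at_split)
    have "(eval_fps G \<longlongrightarrow> 0) (at_right 0)"
      using tendsto_eval_fps_at_0[OF radius_G] G0 by simp
    hence "eventually (\<lambda>s. ereal (norm (eval_fps G s)) < fps_conv_radius H) (at_right 0)"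
      by (rule eventually_compose_filterlim[OF eventually_norm_less_fps_conv_radius[OF radius_H]])
    moreover have "eventually (\<lambda>s::real. ereal (norm s) < fps_conv_radius G) (at_right 0)"
      using eventually_norm_less_fps_conv_radius[OF radius_G] by (rule filter_leD[OF at_within_le_nhds])
    moreover have "eventually (\<lambda>s::real. ereal (norm s) < fps_conv_radius P) (at_right 0)"
      using eventually_norm_less_fps_conv_radius[OF radius_P] by (rule filter_leD[OF at_within_le_nhds])
    ultimately show "eventually (\<lambda>s. eval_fps (P - A) s = s ^ K * W s) (at_right 0)"
      using eval
    proof eventually_elim
      case (elim s)
      have "eval_fps (P - A) s = eval_fps H (eval_fps G s) - eval_fps A s"
        using elim radius_A by (simp add: eval_fps_diff order_less_le_trans)
      also have "\<dots> = eval_fps G s ^ K * eval_fps (fps_shift K H) (eval_fps G s)"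
        using eval_fps_compose_eq_truncated_plus_shift[OF elim(2,1), where K = K] by (simp add: A_def)
      also have "\<dots> = s ^ K * W s"
        using elim(2) radius_V by (simp add: W_def G_eq eval_fps_mult power_mult_distrib)
      finally show ?case .
    qed
  qed (simp add: K_def)
  moreover have "fps_nth A k = fps_nth (H oo G) k"
    by (simp add: A_def K_def fps_sum_nth fps_compose_nth atLeast0AtMost lessThan_Suc_atMost)
  ultimately show "fps_nth P k = fps_nth (H oo G) k"
    by simp
qed

lemma fps_nth_fps_binomial_minus_one_power:
  "fps_nth ((fps_binomial \<gamma> - 1) ^ m) k = (-1) ^ m * C_coeff \<gamma> m k"
proof -
  have "(-1 :: real fps) = fps_const (-1)"
    by (simp flip: fps_const_neg)
  hence minus_one_power: "(-1 :: real fps) ^ j = fps_const ((-1) ^ j)" for j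
    by (simp only: fps_const_power)
  have "(fps_binomial \<gamma> - 1) ^ m = fps_const ((-1) ^ m) * (1 - fps_binomial \<gamma>) ^ m"
    unfolding power_minus[of "1 - fps_binomial \<gamma>", symmetric] minus_one_power[symmetric] by simp
  also have "(1 - fps_binomial \<gamma>) ^ m = (\<Sum>j\<le>m. of_nat (m choose j) * (- fps_binomial \<gamma>) ^ j)"
    using binomial_ring[of "- fps_binomial \<gamma>" 1 m] by simp
  also have "\<dots> = (\<Sum>j\<le>m. fps_const ((-1) ^ j * real (m choose j)) * fps_binomial (real j * \<gamma>))"
  proof (intro sum.cong refl)
    fix j
    have "(- fps_binomial \<gamma>) ^ j = fps_const ((-1) ^ j) * fps_binomial (real j * \<gamma>)"
      unfolding power_minus[of "fps_binomial \<gamma>"] minus_one_power fps_binomial_power ..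
    thus "of_nat (m choose j) * (- fps_binomial \<gamma>) ^ j =
        fps_const ((-1) ^ j * real (m choose j)) * fps_binomial (real j * \<gamma>)"
      by (simp add: fps_of_nat[symmetric] mult_ac)
  qed
  finally show ?thesis
    by (simp add: C_coeff_def fps_sum_nth sum_distrib_left mult_ac)
qed

lemma fps_binomial_compose_linear_sums:
  fixes c s \<gamma> :: real
  assumes "\<bar>c * s\<bar> < 1"
  shows "(\<lambda>n. fps_nth (fps_binomial \<gamma> oo (fps_const c * fps_X)) n * s ^ n) sums (1 + c * s) powr \<gamma>"
proof -
  have "(\<lambda>n. fps_nth (fps_binomial \<gamma> oo (fps_const c * fps_X)) n * s ^ n) =
      (\<lambda>n. (\<gamma> gchoose n) * (c * s) ^ n)"
    by (simp add: fun_eq_iff power_mult_distrib)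
  thus ?thesis
    using gen_binomial_real[OF assms] by simp
qed

lemma fps_conv_radius_binomial_compose_linear:
  fixes c \<gamma> :: real
  assumes "\<bar>c\<bar> \<le> 1"
  shows "1 \<le> fps_conv_radius (fps_binomial \<gamma> oo (fps_const c * fps_X))"
  unfolding fps_conv_radius_def
proof (rule conv_radius_geI_ex')
  fix r :: real
  assume r: "0 < r" "ereal r < 1"
  have "\<bar>c * r\<bar> = \<bar>c\<bar> * r"
    using r by (simp add: abs_mult)
  also have "\<dots> \<le> r"
    using assms r mult_right_mono[of "\<bar>c\<bar>" 1 r] by simp
  also have "\<dots> < 1"
    using r by simp
  finally show "summable (\<lambda>n. fps_nth (fps_binomial \<gamma> oo (fps_const c * fps_X)) n * of_real r ^ n)"
    using fps_binomial_compose_linear_sums by (auto simp: sums_iff)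
qed

lemma eval_fps_binomial_compose_linear:
  fixes c s \<gamma> :: real
  assumes "\<bar>c * s\<bar> < 1"
  shows "eval_fps (fps_binomial \<gamma> oo (fps_const c * fps_X)) s = (1 + c * s) powr \<gamma>"
  using fps_binomial_compose_linear_sums[OF assms] unfolding eval_fps_def by (simp add: sums_iff)

definition binomial_increment_fps :: "real \<Rightarrow> real \<Rightarrow> real \<Rightarrow> real fps" where
  "binomial_increment_fps \<beta> \<phi> \<gamma> = fps_const \<beta> * ((fps_binomial \<gamma> oo (fps_const (- \<phi>) * fps_X)) - 1)"

lemma fps_conv_radius_binomial_increment_fps:
  assumes "\<bar>\<phi>\<bar> \<le> 1"
  shows "1 \<le> fps_conv_radius (binomial_increment_fps \<beta> \<phi> \<gamma>)"
proof -
  let ?B = "fps_binomial \<gamma> oo (fps_const (- \<phi>) * fps_X)"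
  have "1 \<le> fps_conv_radius (?B - 1)"
    using fps_conv_radius_diff[of ?B 1] fps_conv_radius_binomial_compose_linear[of "- \<phi>" \<gamma>] assms
    by simp
  thus ?thesis
    using fps_conv_radius_mult[of "fps_const \<beta>" "?B - 1"]
    unfolding binomial_increment_fps_def by simp
qed

lemma fps_nth_binomial_increment_fps_0 [simp]: "fps_nth (binomial_increment_fps \<beta> \<phi> \<gamma>) 0 = 0"
  by (simp add: binomial_increment_fps_def)

lemma eval_binomial_increment_fps:
  assumes "\<bar>\<phi>\<bar> \<le> 1" "\<bar>s\<bar> < 1"
  shows "eval_fps (binomial_increment_fps \<beta> \<phi> \<gamma>) s = \<beta> * ((1 - \<phi> * s) powr \<gamma> - 1)"
proof -
  let ?B = "fps_binomial \<gamma> oo (fps_const (- \<phi>) * fps_X)"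
  have norm_s: "ereal (norm s) < 1"
    using assms(2) by simp
  have "1 \<le> fps_conv_radius ?B"
    using assms(1) by (intro fps_conv_radius_binomial_compose_linear) simp
  moreover have "1 \<le> fps_conv_radius (?B - 1)"
    using fps_conv_radius_diff[of ?B 1] calculation by simp
  ultimately have "eval_fps (binomial_increment_fps \<beta> \<phi> \<gamma>) s = \<beta> * (eval_fps ?B s - 1)"
    unfolding binomial_increment_fps_def
    using order_less_le_trans[OF norm_s] by (simp add: eval_fps_mult eval_fps_diff)
  moreover have "\<bar>- \<phi> * s\<bar> < 1"
    using assms by (simp add: abs_mult) (smt (verit) mult_left_le_one_le)
  ultimately show ?thesis
    by (simp add: eval_fps_binomial_compose_linear)
qed

lemma fps_nth_binomial_increment_fps_power:
  "fps_nth (binomial_increment_fps \<beta> \<phi> \<gamma> ^ m) k = \<beta> ^ m * (- \<phi>) ^ k * (-1) ^ m * C_coeff \<gamma> m k"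
proof -
  let ?L = "fps_const (- \<phi>) * fps_X"
  have "(fps_binomial \<gamma> oo ?L) - 1 = (fps_binomial \<gamma> - 1) oo ?L"
    by (simp add: fps_compose_sub_distrib)
  hence "binomial_increment_fps \<beta> \<phi> \<gamma> ^ m = fps_const (\<beta> ^ m) * ((fps_binomial \<gamma> - 1) ^ m oo ?L)"
    by (simp add: binomial_increment_fps_def power_mult_distrib fps_compose_power)
  thus ?thesis
    by (simp add: fps_nth_fps_binomial_minus_one_power)
qed

lemma fps_conv_radius_pmf: "1 \<le> fps_conv_radius (Abs_fps (pmf p))"
  unfolding fps_conv_radius_def fps_nth_Abs_fps
proof (rule conv_radius_geI_ex')
  fix r :: real
  assume r: "0 < r" "ereal r < 1"
  show "summable (\<lambda>n. pmf p n * of_real r ^ n)"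
  proof (rule summable_comparison_test)
    show "\<exists>N. \<forall>n\<ge>N. norm (pmf p n * of_real r ^ n) \<le> r ^ n"
      using r by (auto intro!: mult_left_le_one_le simp: pmf_le_1 abs_mult)
    show "summable (\<lambda>n. r ^ n)"
      using r by (intro summable_geometric) simp
  qed
qed

lemma pmf_fps_eq_taylor_fps_compose:
  fixes \<gamma> \<alpha> \<beta> \<phi> :: real and p :: "nat pmf" and h :: "real \<Rightarrow> real"
  assumes "\<bar>\<phi>\<bar> \<le> 1" and "real_analytic_at h (\<alpha> + \<beta>)"
    and "\<And>s. s \<in> {0<..<1} \<Longrightarrow> (\<Sum>k. pmf p k * s ^ k) = h (\<alpha> + \<beta> * (1 - \<phi> * s) powr \<gamma>)"
  shows "Abs_fps (pmf p) = taylor_fps h (\<alpha> + \<beta>) oo binomial_increment_fps \<beta> \<phi> \<gamma>"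
proof (rule eval_fps_compose_eqD)
  let ?G = "binomial_increment_fps \<beta> \<phi> \<gamma>"
  have radius_G: "fps_conv_radius ?G > 0"
    using fps_conv_radius_binomial_increment_fps[OF assms(1)] by (simp add: order_less_le_trans[of 0 1])
  hence "(eval_fps ?G \<longlongrightarrow> 0) (at_right 0)"
    using tendsto_eval_fps_at_0 by fastforce
  hence "eventually (\<lambda>s. h (\<alpha> + \<beta> + eval_fps ?G s) = eval_fps (taylor_fps h (\<alpha> + \<beta>)) (eval_fps ?G s))
      (at_right 0)"
    by (rule eventually_compose_filterlim[OF real_analytic_at_taylor_fps(2)[OF assms(2)]])
  moreover have "eventually (\<lambda>s::real. s \<in> {0<..<1}) (at_right 0)"
    by (rule eventually_at_right_real) simp
  ultimately show "eventually (\<lambda>s. eval_fps (Abs_fps (pmf p)) s =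
      eval_fps (taylor_fps h (\<alpha> + \<beta>)) (eval_fps ?G s)) (at_right 0)"
  proof eventually_elim
    case (elim s)
    hence "eval_fps (Abs_fps (pmf p)) s = h (\<alpha> + \<beta> * (1 - \<phi> * s) powr \<gamma>)"
      using assms(3) by (simp add: eval_fps_def)
    also have "\<alpha> + \<beta> * (1 - \<phi> * s) powr \<gamma> = \<alpha> + \<beta> + eval_fps ?G s"
      using elim assms(1) by (simp add: eval_binomial_increment_fps algebra_simps)
    finally show ?case
      using elim by simp
  qed
  show "fps_conv_radius (Abs_fps (pmf p)) > 0"
    using fps_conv_radius_pmf[of p] by (simp add: order_less_le_trans[of 0 1])
  show "fps_conv_radius (taylor_fps h (\<alpha> + \<beta>)) > 0"
    using assms(2) by (rule real_analytic_at_taylor_fps(1))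
  show "fps_conv_radius ?G > 0" "fps_nth ?G 0 = 0"
    using radius_G by simp_all
qed

theorem mainTheorem1:
  fixes \<gamma> \<alpha> \<beta> \<phi> :: real and p :: "nat pmf" and h :: "real \<Rightarrow> real"
  assumes "0 \<le> \<phi>" "\<phi> \<le> 1"
    and "real_analytic_at h (\<alpha> + \<beta>)"
    and "\<forall>s\<in>{0..1}. (\<Sum>k. pmf p k * s ^ k) = h (\<alpha> + \<beta> * (1 - \<phi> * s) powr \<gamma>)"
  shows "\<forall>k. pmf p k = (- \<phi>) ^ k *
           (\<Sum>m\<le>k. (- \<beta>) ^ m / fact m * (deriv ^^ m) h (\<alpha> + \<beta>) * C_coeff \<gamma> m k)"
proof
  fix k
  have "Abs_fps (pmf p) = taylor_fps h (\<alpha> + \<beta>) oo binomial_increment_fps \<beta> \<phi> \<gamma>"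
    using assms by (intro pmf_fps_eq_taylor_fps_compose) auto
  hence "pmf p k = (\<Sum>m\<le>k. fps_nth (taylor_fps h (\<alpha> + \<beta>)) m *
      fps_nth (binomial_increment_fps \<beta> \<phi> \<gamma> ^ m) k)"
    by (metis atLeast0AtMost fps_compose_nth fps_nth_Abs_fps)
  also have "\<dots> = (- \<phi>) ^ k *
           (\<Sum>m\<le>k. (- \<beta>) ^ m / fact m * (deriv ^^ m) h (\<alpha> + \<beta>) * C_coeff \<gamma> m k)"
    unfolding sum_distrib_left
    by (intro sum.cong refl)
      (simp add: taylor_fps_def fps_nth_binomial_increment_fps_power power_minus[of \<beta>])
  finally show "pmf p k = \<dots>" .
qed

end
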